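(* Let $N,S\ge 1$ and $d\ge 2$ be integers, and let $\pi$ be a next-token distribution on $[N]^S$ such that for every $t_{1:S}\in[N]^S$ there exists $t_{S+1}\in[N]$ with $\pi(t_{S+1}\mid t_{1:S})=1$ (i.e. all conditional distributions have zero entropy). Then $d_{KL}(\pi,\mathcal{L}(N,S,d))=0$.
   Context: $[N]=\{1,\dots,N\}$. A next-token distribution $\pi$ consists of a prior probability distribution on $[N]^S$ together with, for each $t_{1:S}\in[N]^S$, a conditional probability distribution $\pi_{t_{1:S}}=\pi(\cdot\mid t_{1:S})$ on $[N]$. For $f:[N]^S\to\mathbb{R}^N$, $d_{KL}(\pi,f):=\mathbb{E}_{t_{1:S}\sim\pi}\big[\mathrm{KL}(\pi_{t_{1:S}}\,\|\,\mathrm{Softmax}(f(t_{1:S})))\big]$. The set of sequence encoders is $\mathcal{L}(N,S,d):=\{f_{W,E}: W\in\mathbb{R}^{N\times d},\ E:[N]^S\to\mathbb{R}^d\}$ with $f_{W,E}(t_{1:S})=W E(t_{1:S})$, and $d_{KL}(\pi,\mathcal{L}(N,S,d)):=\inf_{f\in\mathcal{L}(N,S,d)}d_{KL}(\pi,f)$. *)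

theory Defs
  imports "HOL-Analysis.Analysis"
begin

definition seqs :: "nat \<Rightarrow> nat \<Rightarrow> nat list set" where
  "seqs N S = {t. length t = S \<and> set t \<subseteq> {1..N}}"

definition prob_vec :: "nat \<Rightarrow> (nat \<Rightarrow> real) \<Rightarrow> bool" where
  "prob_vec N P \<longleftrightarrow> (\<forall>i\<in>{1..N}. 0 \<le> P i) \<and> (\<Sum>i=1..N. P i) = 1"

text \<open>A next-token distribution: prior p on [N]^S and conditionals q t on [N].\<close>
definition next_token_dist :: "nat \<Rightarrow> nat \<Rightarrow> (nat list \<Rightarrow> real) \<Rightarrow> (nat list \<Rightarrow> nat \<Rightarrow> real) \<Rightarrow> bool" where
  "next_token_dist N S p q \<longleftrightarrow>
     (\<forall>t\<in>seqs N S. 0 \<le> p t) \<and> (\<Sum>t\<in>seqs N S. p t) = 1 \<and>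
     (\<forall>t\<in>seqs N S. prob_vec N (q t))"

definition softmax :: "nat \<Rightarrow> (nat \<Rightarrow> real) \<Rightarrow> nat \<Rightarrow> real" where
  "softmax N v i = exp (v i) / (\<Sum>j=1..N. exp (v j))"

definition KL :: "nat \<Rightarrow> (nat \<Rightarrow> real) \<Rightarrow> (nat \<Rightarrow> real) \<Rightarrow> real" where
  "KL N P Q = (\<Sum>i=1..N. if P i = 0 then 0 else P i * ln (P i / Q i))"

definition d_KL :: "nat \<Rightarrow> nat \<Rightarrow> (nat list \<Rightarrow> real) \<Rightarrow> (nat list \<Rightarrow> nat \<Rightarrow> real)
                     \<Rightarrow> (nat list \<Rightarrow> nat \<Rightarrow> real) \<Rightarrow> real" where
  "d_KL N S p q f = (\<Sum>t\<in>seqs N S. p t * KL N (q t) (softmax N (f t)))"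

text \<open>Sequence encoder f_{W,E}(t) = W E(t), W an N x d matrix, E : [N]^S -> R^d.\<close>
definition encoder :: "nat \<Rightarrow> (nat \<Rightarrow> nat \<Rightarrow> real) \<Rightarrow> (nat list \<Rightarrow> nat \<Rightarrow> real) \<Rightarrow> nat list \<Rightarrow> nat \<Rightarrow> real" where
  "encoder d W E t i = (\<Sum>k=1..d. W i k * E t k)"

definition d_KL_L :: "nat \<Rightarrow> nat \<Rightarrow> nat \<Rightarrow> (nat list \<Rightarrow> real) \<Rightarrow> (nat list \<Rightarrow> nat \<Rightarrow> real) \<Rightarrow> real" where
  "d_KL_L N S d p q = (INF WE \<in> (UNIV :: ((nat \<Rightarrow> nat \<Rightarrow> real) \<times> (nat list \<Rightarrow> nat \<Rightarrow> real)) set).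
                          d_KL N S p q (encoder d (fst WE) (snd WE)))"

end

theory Submission
  imports Defs
begin

text \<open>If every conditional is a point mass at \<open>s(t)\<close>, the KL term at \<open>t\<close> is \<open>-ln\<close> of the softmax
  probability of \<open>s(t)\<close>. With two embedding dimensions one can realise the logits
  \<open>i \<mapsto> c(2 s(t) i - i\<^sup>2) = c s(t)\<^sup>2 - c (i - s(t))\<^sup>2\<close>, which exceed every other logit at
  \<open>s(t)\<close> by at least \<open>c\<close>; hence each KL term is at most \<open>(N - 1) e\<^sup>-\<^sup>c\<close>, and letting
  \<open>c \<rightarrow> \<infinity>\<close> shows that the infimum is \<open>0\<close>.\<close>

lemma prob_vec_point_mass:
  assumes "prob_vec N P" and "s \<in> {1..N}" and "P s = 1" and "i \<in> {1..N}" and "i \<noteq> s"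
  shows "P i = 0"
proof -
  have nonneg: "\<And>j. j \<in> {1..N} \<Longrightarrow> 0 \<le> P j" and "(\<Sum>j=1..N. P j) = 1"
    using assms(1) unfolding prob_vec_def by auto
  then have "(\<Sum>j\<in>{1..N} - {s}. P j) = 0"
    using assms(2,3) by (simp add: sum.remove)
  then show ?thesis
    using assms(4,5) nonneg by (subst (asm) sum_nonneg_eq_0_iff) auto
qed

lemma KL_point_mass:
  assumes "prob_vec N P" and "s \<in> {1..N}" and "P s = 1"
  shows "KL N P Q = - ln (Q s)"
proof -
  have "KL N P Q = (\<Sum>i\<in>{1..N}. if i = s then - ln (Q s) else 0)"
    unfolding KL_def
    using prob_vec_point_mass[OF assms] assms(3) by (intro sum.cong) (auto simp: ln_div)
  then show ?thesis
    using assms(2) by simp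
qed

lemma softmax_pos:
  assumes "s \<in> {1..N}"
  shows "0 < softmax N v s"
  unfolding softmax_def using assms by (intro divide_pos_pos sum_pos) auto

lemma softmax_le_one:
  assumes "s \<in> {1..N}"
  shows "softmax N v s \<le> 1"
proof -
  have "exp (v s) \<le> (\<Sum>j=1..N. exp (v j))"
    using assms by (intro member_le_sum) auto
  moreover have "0 < (\<Sum>j=1..N. exp (v j))"
    using assms by (intro sum_pos) auto
  ultimately show ?thesis
    unfolding softmax_def by simp
qed

lemma KL_point_mass_softmax_nonneg:
  assumes "prob_vec N P" and "s \<in> {1..N}" and "P s = 1"
  shows "0 \<le> KL N P (softmax N v)"
  using KL_point_mass[OF assms] softmax_pos[OF assms(2)] softmax_le_one[OF assms(2)] by simp

lemma neg_ln_softmax_le: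
  assumes s: "s \<in> {1..N}" and gap: "\<And>j. j \<in> {1..N} \<Longrightarrow> j \<noteq> s \<Longrightarrow> v j \<le> v s - c"
  shows "- ln (softmax N v s) \<le> (real N - 1) * exp (- c)"
proof -
  have "N \<ge> 1"
    using s by simp
  have "- ln (softmax N v s) = ln ((\<Sum>j=1..N. exp (v j)) / exp (v s))"
    unfolding softmax_def using s by (simp add: ln_div sum_pos)
  also have "\<dots> = ln (1 + (\<Sum>j\<in>{1..N} - {s}. exp (v j - v s)))"
    using s by (simp add: add_divide_distrib sum_divide_distrib exp_diff sum.remove)
  also have "\<dots> \<le> ln (1 + (\<Sum>j\<in>{1..N} - {s}. exp (- c)))"
  proof (intro ln_mono add_left_mono sum_mono)
    show "exp (v j - v s) \<le> exp (- c)" if "j \<in> {1..N} - {s}" for j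
      using gap[of j] that by simp
  qed (auto intro!: add_pos_nonneg sum_nonneg)
  also have "\<dots> = ln (1 + (real N - 1) * exp (- c))"
    using s by (simp add: card_Diff_singleton of_nat_diff)
  also have "\<dots> \<le> (real N - 1) * exp (- c)"
    using \<open>N \<ge> 1\<close> by (intro ln_add_one_self_le_self) auto
  finally show ?thesis .
qed

lemma quadratic_logit_gap:
  fixes i s :: nat and c :: real
  assumes "c \<ge> 0" and "i \<noteq> s"
  shows "c * (2 * real s * real i - (real i)\<^sup>2) \<le> c * (2 * real s * real s - (real s)\<^sup>2) - c"
proof -
  have "1 \<le> \<bar>real i - real s\<bar>"
    using assms(2) by linarith
  then have "1 \<le> (real i - real s)\<^sup>2"
    by (metis abs_ge_zero one_le_power power2_abs)
  then have "c \<le> c * (real i - real s)\<^sup>2"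
    using assms(1) by (simp add: mult_le_cancel_left1)
  then show ?thesis
    by (simp add: power2_eq_square algebra_simps)
qed

lemma KL_point_mass_quadratic_softmax_le:
  assumes "prob_vec N P" and "s \<in> {1..N}" and "P s = 1" and "c \<ge> 0"
  shows "KL N P (softmax N (\<lambda>i. c * (2 * real s * real i - (real i)\<^sup>2))) \<le> (real N - 1) * exp (- c)"
  unfolding KL_point_mass[OF assms(1-3)]
  using assms(2,4) by (intro neg_ln_softmax_le) (simp_all add: quadratic_logit_gap)

lemma encoder_quadratic_logits:
  assumes "d \<ge> 2"
  shows "\<exists>W E. \<forall>t i. encoder d W E t i = a t * real i - b t * (real i)\<^sup>2"
proof (intro exI allI)
  fix t i
  define W :: "nat \<Rightarrow> nat \<Rightarrow> real" where
    "W i k = (if k = 1 then real i else if k = 2 then - (real i)\<^sup>2 else 0)" for i k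
  define E :: "nat list \<Rightarrow> nat \<Rightarrow> real" where
    "E t k = (if k = 1 then a t else if k = 2 then b t else 0)" for t k
  have "encoder d W E t i = (\<Sum>k\<in>{1, 2}. W i k * E t k)"
    unfolding encoder_def using assms by (intro sum.mono_neutral_right) (auto simp: W_def)
  then show "encoder d W E t i = a t * real i - b t * (real i)\<^sup>2"
    by (simp add: W_def E_def)
qed

lemma d_KL_nonneg:
  assumes "next_token_dist N S p q" and "\<And>t. t \<in> seqs N S \<Longrightarrow> 0 \<le> KL N (q t) (softmax N (f t))"
  shows "0 \<le> d_KL N S p q f"
  using assms unfolding d_KL_def next_token_dist_def by (auto intro!: sum_nonneg)

lemma d_KL_le:
  assumes "next_token_dist N S p q" and "\<And>t. t \<in> seqs N S \<Longrightarrow> KL N (q t) (softmax N (f t)) \<le> B"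
  shows "d_KL N S p q f \<le> B"
proof -
  have "d_KL N S p q f \<le> (\<Sum>t\<in>seqs N S. p t * B)"
    using assms unfolding d_KL_def next_token_dist_def by (auto intro!: sum_mono mult_left_mono)
  also have "\<dots> = B"
    using assms(1) unfolding next_token_dist_def by (simp flip: sum_distrib_right)
  finally show ?thesis .
qed

lemma d_KL_L_nonneg:
  assumes "\<And>W E. 0 \<le> d_KL N S p q (encoder d W E)"
  shows "0 \<le> d_KL_L N S d p q"
  unfolding d_KL_L_def using assms by (intro cINF_greatest) auto

lemma d_KL_L_le_d_KL:
  assumes "\<And>W E. 0 \<le> d_KL N S p q (encoder d W E)"
  shows "d_KL_L N S d p q \<le> d_KL N S p q (encoder d W E)"
proof -
  have "bdd_below (range (\<lambda>WE. d_KL N S p q (encoder d (fst WE) (snd WE))))"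
    using assms by (intro bdd_belowI[of _ 0]) auto
  from cINF_lower[OF this, of "(W, E)"] show ?thesis
    unfolding d_KL_L_def by simp
qed

lemma d_KL_point_mass_nonneg:
  assumes "next_token_dist N S p q" and "\<And>t. t \<in> seqs N S \<Longrightarrow> s t \<in> {1..N} \<and> q t (s t) = 1"
  shows "0 \<le> d_KL N S p q f"
  using assms KL_point_mass_softmax_nonneg unfolding next_token_dist_def
  by (intro d_KL_nonneg[OF assms(1)]) blast

lemma d_KL_L_point_mass_le:
  assumes dist: "next_token_dist N S p q" and "d \<ge> 2" and "c \<ge> 0"
    and s: "\<And>t. t \<in> seqs N S \<Longrightarrow> s t \<in> {1..N} \<and> q t (s t) = 1"
  shows "d_KL_L N S d p q \<le> (real N - 1) * exp (- c)"
proof -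
  obtain W E where "\<forall>t i. encoder d W E t i = c * 2 * real (s t) * real i - c * (real i)\<^sup>2"
    using encoder_quadratic_logits[OF \<open>d \<ge> 2\<close>, of "\<lambda>t. c * 2 * real (s t)" "\<lambda>_. c"] by blast
  then have enc: "\<And>t. encoder d W E t = (\<lambda>i. c * (2 * real (s t) * real i - (real i)\<^sup>2))"
    by (simp add: fun_eq_iff algebra_simps)
  have "KL N (q t) (softmax N (encoder d W E t)) \<le> (real N - 1) * exp (- c)"
    if "t \<in> seqs N S" for t
    unfolding enc using s[OF that] dist that \<open>c \<ge> 0\<close> unfolding next_token_dist_def
    by (intro KL_point_mass_quadratic_softmax_le) auto
  then have "d_KL N S p q (encoder d W E) \<le> (real N - 1) * exp (- c)"
    by (rule d_KL_le[OF dist])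
  then show ?thesis
    using d_KL_L_le_d_KL d_KL_point_mass_nonneg[OF dist s] order_trans by blast
qed

theorem proposition3:
  fixes N S d :: nat and p :: "nat list \<Rightarrow> real" and q :: "nat list \<Rightarrow> nat \<Rightarrow> real"
  assumes "N \<ge> 1" and "S \<ge> 1" and "d \<ge> 2"
    and "next_token_dist N S p q"
    and "\<forall>t\<in>seqs N S. \<exists>s\<in>{1..N}. q t s = 1"
  shows "d_KL_L N S d p q = 0"
proof -
  obtain s where s: "\<And>t. t \<in> seqs N S \<Longrightarrow> s t \<in> {1..N} \<and> q t (s t) = 1"
    using assms(5) by metis
  have "((\<lambda>c. (real N - 1) * exp (- c)) \<longlongrightarrow> 0) at_top"
    by (intro tendsto_mult_right_zero filterlim_compose[OF exp_at_bot] filterlim_uminus_at_bot_at_top)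
  then have "d_KL_L N S d p q \<le> 0"
    using d_KL_L_point_mass_le[OF assms(4,3) _ s]
    by (intro tendsto_lowerbound) (auto intro: eventually_at_top_linorderI)
  moreover have "0 \<le> d_KL_L N S d p q"
    using d_KL_point_mass_nonneg[OF assms(4) s] by (rule d_KL_L_nonneg)
  ultimately show ?thesis
    by simp
qed

end
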